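(* There exists $C>0$ such that for all $h\in(0,1]$ and all $0\le u<t\le T$, $$\big|g^{(h)}(t,u)-1\big|\le C\Big[\Big(\tfrac{h}{t-u}\Big)^{\alpha}\wedge1\Big]+C\,h\,K\big(h-\chi_h(u)\big)\Big[\Big(\tfrac{1}{t-u}\Big)^{\alpha}\wedge\Big(\tfrac1h\Big)^{\alpha}\Big].$$
   Context: Fix $T>0$ and $\alpha\in(1/2,1)$. Let $K(u)=\frac{u^{\alpha-1}}{\Gamma(\alpha)}\mathbf 1_{u>0}$ and $L(u)=\frac{u^{-\alpha}}{\Gamma(1-\alpha)}\mathbf 1_{u>0}$. For $h>0$ let $\varphi_h(t)=h\lfloor t/h\rfloor$ and $\chi_h(u)=u-\varphi_h(u)\in[0,h)$. Define $K^{(h)}(t,s)=K(\varphi_h(t)-s)\mathbf 1_{0\le s<\varphi_h(t)}$ and $g^{(h)}(t,s)=\int_s^tL(t-v)K^{(h)}(v,s)\,dv$ for $0\le s<t\le T$. *)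

theory Defs
  imports "HOL-Analysis.Analysis"
begin

definition Kker :: "real \<Rightarrow> real \<Rightarrow> real" where
  "Kker \<alpha> u = (if u > 0 then u powr (\<alpha> - 1) / Gamma \<alpha> else 0)"

definition Lker :: "real \<Rightarrow> real \<Rightarrow> real" where
  "Lker \<alpha> u = (if u > 0 then u powr (- \<alpha>) / Gamma (1 - \<alpha>) else 0)"

definition phi :: "real \<Rightarrow> real \<Rightarrow> real" where
  "phi h t = h * of_int \<lfloor>t / h\<rfloor>"

definition chi :: "real \<Rightarrow> real \<Rightarrow> real" where
  "chi h u = u - phi h u"

definition Kh :: "real \<Rightarrow> real \<Rightarrow> real \<Rightarrow> real \<Rightarrow> real" where
  "Kh \<alpha> h t s = (if 0 \<le> s \<and> s < phi h t then Kker \<alpha> (phi h t - s) else 0)"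

definition gh :: "real \<Rightarrow> real \<Rightarrow> real \<Rightarrow> real \<Rightarrow> real" where
  "gh \<alpha> h t s = (\<integral>v\<in>{s..t}. Lker \<alpha> (t - v) * Kh \<alpha> h v s \<partial>lborel)"

end

theory Submission
  imports Defs
begin

text \<open>
  Because \<open>K * L = 1\<close> (a Beta integral), \<open>g\<^sup>h(t,u) - 1\<close> is the integral over \<open>[u,t]\<close> of
  \<open>L(t-v) (K\<^sup>h(v,u) - K(v-u))\<close>.  Let \<open>a = \<phi>\<^sub>h(u) + h\<close> (\<open>next_node\<close> below) be the first
  grid point after \<open>u\<close>, so that \<open>a - u = h - \<chi>\<^sub>h(u)\<close> and \<open>K\<^sup>h(v,u) \<le> K(a-u)\<close>.  If \<open>t - u \<le> 4h\<close>, then \<open>g\<^sup>h(t,u)\<close> and \<open>1\<close>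
  are separately of the required size, because \<open>\<integral>\<^sub>u\<^sup>t L(t-v) dv\<close> is of order \<open>(t-u)\<^sup>1\<^sup>-\<^sup>\<alpha>\<close>.
  Otherwise split \<open>[u,t]\<close> at \<open>a\<close> and \<open>a+h\<close>: on \<open>[u,a)\<close> the discretised kernel vanishes and
  \<open>L(t-v)\<close> is of order \<open>(t-u)\<^sup>-\<^sup>\<alpha>\<close>; on the first cell \<open>[a,a+h]\<close> both kernels are at most
  \<open>K(a-u)\<close>; beyond it \<open>\<phi>\<^sub>h(v) - u \<ge> h\<close>, so the discretisation error \<open>K(\<phi>\<^sub>h(v)-u) - K(v-u)\<close>
  is at most \<open>h |K'(\<phi>\<^sub>h(v)-u)|\<close>, of order \<open>h (v-u)\<^sup>\<alpha>\<^sup>-\<^sup>2\<close>.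
  None of this needs \<open>\<alpha> > 1/2\<close>, \<open>h \<le> 1\<close> or \<open>t \<le> T\<close>.
\<close>

section \<open>Elementary power inequalities\<close>

lemma powr_diff_le:
  fixes x \<delta> q :: real
  assumes "0 < x" "0 \<le> \<delta>" "-1 \<le> q"
  shows "x powr q - (x + \<delta>) powr q \<le> \<delta> * x powr (q - 1)"
proof -
  define r where "r = \<delta> / x"
  have r: "0 \<le> r" using assms by (simp add: r_def)
  have "1 - r \<le> 1 / (1 + r)" using r by (simp add: field_simps)
  also have "\<dots> = (1 + r) powr (-1)" using r by (simp add: powr_neg_one)
  also have "\<dots> \<le> (1 + r) powr q" using assms r by (intro powr_mono) auto
  finally have "x powr q * (1 - r) \<le> x powr q * (1 + r) powr q"
    by (intro mult_left_mono) auto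
  also have "\<dots> = (x * (1 + r)) powr q"
    using assms r by (simp add: powr_mult)
  also have "x * (1 + r) = x + \<delta>"
    using assms by (simp add: r_def field_simps)
  finally show ?thesis
    using assms by (simp add: r_def powr_diff field_simps)
qed

lemma min_le_powr:
  fixes x \<alpha> :: real
  assumes "0 \<le> x" "0 < \<alpha>" "\<alpha> \<le> 1"
  shows "min x 1 \<le> x powr \<alpha>"
proof (cases "x \<le> 1")
  case True
  then have "x powr 1 \<le> x powr \<alpha>" using assms by (intro powr_mono') auto
  then show ?thesis using assms by simp
next
  case False
  then show ?thesis using ge_one_powr_ge_zero[of x \<alpha>] assms by simp
qed

lemma powr_neg_le_of_half_le:
  fixes s y \<beta> n :: real
  assumes "0 < s" "s / 2 \<le> y" "0 \<le> \<beta>" "\<beta> \<le> n"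
  shows "y powr (-\<beta>) \<le> 2 powr n * s powr (-\<beta>)"
proof -
  have "y powr (-\<beta>) \<le> (s / 2) powr (-\<beta>)" using assms by (intro powr_mono2') auto
  also have "\<dots> = 2 powr \<beta> * s powr (-\<beta>)"
    by (simp add: powr_divide powr_minus_divide)
  also have "\<dots> \<le> 2 powr n * s powr (-\<beta>)"
    using assms by (intro mult_right_mono powr_mono) auto
  finally show ?thesis .
qed

lemma powr_one_minus_le_min:
  fixes s h \<alpha> :: real
  assumes "0 < s" "0 < h" "s \<le> 4 * h" "0 < \<alpha>" "\<alpha> < 1"
  shows "s powr (1 - \<alpha>) \<le> 4 * h * min ((1 / s) powr \<alpha>) ((1 / h) powr \<alpha>)"
proof -
  have "s powr (1 - \<alpha>) = s * (1 / s) powr \<alpha>"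
    using assms by (simp add: powr_diff powr_divide)
  also have "\<dots> \<le> 4 * h * (1 / s) powr \<alpha>"
    using assms by (intro mult_right_mono) auto
  finally have bound_s: "s powr (1 - \<alpha>) \<le> 4 * h * (1 / s) powr \<alpha>" .
  have "s powr (1 - \<alpha>) \<le> (4 * h) powr (1 - \<alpha>)"
    using assms by (intro powr_mono2) auto
  also have "\<dots> = 4 powr (1 - \<alpha>) * (h * (1 / h) powr \<alpha>)"
    using assms by (simp add: powr_mult powr_diff powr_divide)
  also have "\<dots> \<le> 4 powr 1 * (h * (1 / h) powr \<alpha>)"
    using assms by (intro mult_right_mono powr_mono) auto
  finally have "s powr (1 - \<alpha>) \<le> 4 * h * (1 / h) powr \<alpha>"
    by simp
  with bound_s show ?thesis
    by simp
qed

lemma powr_product_split: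
  fixes u v t \<alpha> :: real
  assumes "0 < \<alpha>" "\<alpha> < 1" "u < v" "v \<le> t"
  shows "(t - v) powr (-\<alpha>) * (v - u) powr (\<alpha> - 2)
    \<le> 4 * (t - u) powr (\<alpha> - 2) * (t - v) powr (-\<alpha>) + 2 * (t - u) powr (-\<alpha>) * (v - u) powr (\<alpha> - 2)"
proof (cases "(t - u) / 2 \<le> v - u")
  case True
  have "(v - u) powr (-(2 - \<alpha>)) \<le> 2 powr 2 * (t - u) powr (-(2 - \<alpha>))"
    using assms True by (intro powr_neg_le_of_half_le) auto
  then have "(t - v) powr (-\<alpha>) * (v - u) powr (\<alpha> - 2) \<le> (t - v) powr (-\<alpha>) * (4 * (t - u) powr (\<alpha> - 2))"
    by (intro mult_left_mono) auto
  then show ?thesis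
    by (simp add: mult_ac add_increasing2)
next
  case False
  then have "(t - v) powr (-\<alpha>) \<le> 2 powr 1 * (t - u) powr (-\<alpha>)"
    using assms by (intro powr_neg_le_of_half_le) auto
  then have "(t - v) powr (-\<alpha>) * (v - u) powr (\<alpha> - 2) \<le> 2 * (t - u) powr (-\<alpha>) * (v - u) powr (\<alpha> - 2)"
    by (intro mult_right_mono) auto
  then show ?thesis
    by (simp add: add_increasing)
qed

lemma tail_powr_sum_le:
  fixes h s \<alpha> :: real
  assumes "0 < h" "h \<le> s" "0 < \<alpha>" "\<alpha> \<le> 1"
  shows "h * (4 * s powr (\<alpha> - 2) * s powr (1 - \<alpha>) + 2 * s powr (-\<alpha>) * h powr (\<alpha> - 1)) \<le> 6 * (h / s) powr \<alpha>"
proof -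
  have "min (h / s) 1 \<le> (h / s) powr \<alpha>"
    using assms by (intro min_le_powr) auto
  then have "h / s \<le> (h / s) powr \<alpha>"
    using assms by simp
  moreover have "h * (4 * s powr (\<alpha> - 2) * s powr (1 - \<alpha>) + 2 * s powr (-\<alpha>) * h powr (\<alpha> - 1))
      = 4 * (h / s) + 2 * (h / s) powr \<alpha>"
  proof -
    have pw: "s powr (\<alpha> - 2) = s powr \<alpha> / s\<^sup>2" "s powr (1 - \<alpha>) = s / s powr \<alpha>"
      "s powr (-\<alpha>) = 1 / s powr \<alpha>" "h powr (\<alpha> - 1) = h powr \<alpha> / h" "(h / s) powr \<alpha> = h powr \<alpha> / s powr \<alpha>"
      using assms by (simp_all add: powr_diff powr_minus_divide powr_divide)
    show ?thesis
      unfolding pw using assms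
      by (simp add: field_simps power2_eq_square)
  qed
  ultimately show ?thesis
    by simp
qed

section \<open>Power and Beta integrals\<close>

lemma has_integral_powr_shifted:
  fixes u c b \<beta> :: real
  assumes "\<beta> \<noteq> 0" "u \<le> c" "c \<le> b" "0 < \<beta> \<or> u < c"
  shows "((\<lambda>v. (v - u) powr (\<beta> - 1)) has_integral ((b - u) powr \<beta> - (c - u) powr \<beta>) / \<beta>) {c..b}"
proof -
  define F where "F v = (v - u) powr \<beta> / \<beta>" for v
  have "((\<lambda>v. (v - u) powr (\<beta> - 1)) has_integral F b - F c) {c..b}"
  proof (rule fundamental_theorem_of_calculus_interior)
    show "continuous_on {c..b} F"
      unfolding F_def using assms by (intro continuous_intros continuous_on_powr') auto
    fix x assume "x \<in> {c<..<b}"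
    then have "(F has_real_derivative (x - u) powr (\<beta> - 1)) (at x)"
      unfolding F_def using assms by (auto intro!: derivative_eq_intros)
    then show "(F has_vector_derivative (x - u) powr (\<beta> - 1)) (at x)"
      by (simp add: has_real_derivative_iff_has_vector_derivative)
  qed (use assms in auto)
  then show ?thesis by (simp add: F_def diff_divide_distrib)
qed

lemma has_integral_powr_reflected:
  fixes t c b \<beta> :: real
  assumes "\<beta> \<noteq> 0" "c \<le> b" "b \<le> t" "0 < \<beta> \<or> b < t"
  shows "((\<lambda>v. (t - v) powr (\<beta> - 1)) has_integral ((t - c) powr \<beta> - (t - b) powr \<beta>) / \<beta>) {c..b}"
  using has_integral_powr_shifted[of \<beta> "-t" "-b" "-c"] assms
  by (subst has_integral_reflect_real[symmetric]) (simp add: add.commute)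

lemma has_integral_Beta_shifted:
  fixes a b u t :: real
  assumes "0 < a" "0 < b" "u < t"
  shows "((\<lambda>v. (v - u) powr (a - 1) * (t - v) powr (b - 1))
           has_integral (t - u) powr (a + b - 1) * Beta a b) {u..t}"
proof -
  define s where "s = t - u"
  have s: "0 < s" using assms by (simp add: s_def)
  have "((\<lambda>v. (\<lambda>x. x powr (a - 1) * (1 - x) powr (b - 1)) ((1 / s) *\<^sub>R v + - u / s))
          has_integral Beta a b /\<^sub>R (1 / s) ^ DIM(real))
          (cbox ((0 - - u / s) /\<^sub>R (1 / s)) ((1 - - u / s) /\<^sub>R (1 / s)))"
    using has_integral_Beta_real[OF assms(1,2)] s
    by (intro has_integral_affinity') (auto simp: cbox_interval)
  moreover have "(0 - - u / s) /\<^sub>R (1 / s) = u" "(1 - - u / s) /\<^sub>R (1 / s) = t"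
    using s by (simp_all add: s_def field_simps)
  ultimately have "((\<lambda>v. ((v - u) / s) powr (a - 1) * (1 - (v - u) / s) powr (b - 1))
          has_integral s * Beta a b) {u..t}"
    using s by (simp add: cbox_interval diff_divide_distrib)
  then have "((\<lambda>v. ((v - u) / s) powr (a - 1) * (1 - (v - u) / s) powr (b - 1) * s powr (a + b - 2))
          has_integral s * Beta a b * s powr (a + b - 2)) {u..t}"
    by (rule has_integral_mult_left)
  moreover have "((v - u) / s) powr (a - 1) * (1 - (v - u) / s) powr (b - 1) * s powr (a + b - 2)
      = (v - u) powr (a - 1) * (t - v) powr (b - 1)" if "v \<in> {u..t}" for v
  proof -
    have e1: "1 - (v - u) / s = (t - v) / s" using s by (simp add: s_def field_simps)
    have d: "((v - u) / s) powr (a - 1) = (v - u) powr (a - 1) / s powr (a - 1)"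
      "((t - v) / s) powr (b - 1) = (t - v) powr (b - 1) / s powr (b - 1)"
      using that s by (intro powr_divide; simp)+
    have e2: "s powr (a - 1) * s powr (b - 1) = s powr (a + b - 2)"
      using powr_add[of s "a - 1" "b - 1"] by (simp add: algebra_simps)
    show ?thesis unfolding e1 d e2[symmetric] using s by simp
  qed
  ultimately have "((\<lambda>v. (v - u) powr (a - 1) * (t - v) powr (b - 1))
                     has_integral s * Beta a b * s powr (a + b - 2)) {u..t}"
    by (rule has_integral_eq[rotated])
  moreover have "s * s powr (a + b - 2) = s powr (a + b - 1)"
    using powr_add[of s 1 "a + b - 2"] s by (simp add: algebra_simps)
  ultimately show ?thesis by (simp add: s_def mult_ac)
qed

lemma set_integrable_lborel_if_nonneg:
  fixes f :: "real \<Rightarrow> real"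
  assumes "f \<in> borel_measurable borel" "S \<in> sets borel" "f integrable_on S" "\<And>x. x \<in> S \<Longrightarrow> 0 \<le> f x"
  shows "set_integrable lborel S f"
proof -
  have "set_integrable lebesgue S f"
    using assms by (intro nonnegative_absolutely_integrable_1)
  then show ?thesis
    unfolding set_integrable_def using assms by (subst (asm) integrable_completion) auto
qed

lemma abs_integral_le_has_integral:
  fixes f g :: "real \<Rightarrow> real"
  assumes "f integrable_on {c..b}" "(g has_integral I) {c..b}" "\<And>v. v \<in> {c..b} \<Longrightarrow> \<bar>f v\<bar> \<le> g v"
  shows "\<bar>integral {c..b} f\<bar> \<le> I"
  using integral_norm_bound_integral[of f "{c..b}" g] assms
  by (auto simp: integrable_on_def integral_unique)

section \<open>The kernels and the grid\<close>

lemma Kker_eq: "0 \<le> x \<Longrightarrow> Kker \<alpha> x = x powr (\<alpha> - 1) / Gamma \<alpha>"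
  by (auto simp: Kker_def)

lemma Lker_eq: "0 \<le> x \<Longrightarrow> Lker \<alpha> x = x powr (-\<alpha>) / Gamma (1 - \<alpha>)"
  by (auto simp: Lker_def)

lemma Kker_nonneg: "0 < \<alpha> \<Longrightarrow> 0 \<le> Kker \<alpha> x"
  by (simp add: Kker_def)

lemma Lker_nonneg: "\<alpha> < 1 \<Longrightarrow> 0 \<le> Lker \<alpha> x"
  by (simp add: Lker_def)

lemma Kker_antimono:
  assumes "0 < \<alpha>" "\<alpha> < 1" "0 < x" "x \<le> y"
  shows "Kker \<alpha> y \<le> Kker \<alpha> x"
  using assms by (simp add: Kker_def divide_right_mono powr_mono2')

lemma Kker_diff_le:
  assumes "0 < \<alpha>" "0 < x" "0 \<le> \<delta>"
  shows "Kker \<alpha> x - Kker \<alpha> (x + \<delta>) \<le> \<delta> * x powr (\<alpha> - 2) / Gamma \<alpha>"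
proof -
  have "x powr (\<alpha> - 1) - (x + \<delta>) powr (\<alpha> - 1) \<le> \<delta> * x powr (\<alpha> - 1 - 1)"
    using assms by (intro powr_diff_le) auto
  then show ?thesis
    using assms by (simp add: Kker_eq diff_divide_distrib[symmetric] divide_right_mono)
qed

lemma Lker_le_of_half_le:
  assumes "0 \<le> \<alpha>" "\<alpha> < 1" "0 < s" "s / 2 \<le> y"
  shows "Lker \<alpha> y \<le> 2 * s powr (-\<alpha>) / Gamma (1 - \<alpha>)"
proof -
  have "y powr (-\<alpha>) \<le> 2 powr 1 * s powr (-\<alpha>)"
    using assms by (intro powr_neg_le_of_half_le) auto
  then show ?thesis
    using assms by (simp add: Lker_eq divide_right_mono)
qed

lemma Kker_measurable [measurable]: "Kker \<alpha> \<in> borel_measurable borel"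
  unfolding Kker_def by measurable

lemma Lker_measurable [measurable]: "Lker \<alpha> \<in> borel_measurable borel"
  unfolding Lker_def by measurable

lemma phi_measurable [measurable]: "phi h \<in> borel_measurable borel"
  unfolding phi_def by measurable

lemma Kh_measurable [measurable]: "(\<lambda>v. Kh \<alpha> h v u) \<in> borel_measurable borel"
  unfolding Kh_def by measurable

lemma has_integral_Lker:
  assumes "\<alpha> < 1" "c \<le> t"
  shows "((\<lambda>v. Lker \<alpha> (t - v)) has_integral (t - c) powr (1 - \<alpha>) / ((1 - \<alpha>) * Gamma (1 - \<alpha>))) {c..t}"
proof -
  have "((\<lambda>v. (t - v) powr (1 - \<alpha> - 1)) has_integral ((t - c) powr (1 - \<alpha>) - (t - t) powr (1 - \<alpha>)) / (1 - \<alpha>)) {c..t}"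
    using assms by (intro has_integral_powr_reflected) auto
  then have "((\<lambda>v. (t - v) powr (-\<alpha>) / Gamma (1 - \<alpha>)) has_integral (t - c) powr (1 - \<alpha>) / (1 - \<alpha>) / Gamma (1 - \<alpha>)) {c..t}"
    by (intro has_integral_divide) simp
  then show ?thesis
    by (subst has_integral_cong[where g = "\<lambda>v. (t - v) powr (-\<alpha>) / Gamma (1 - \<alpha>)"]) (auto simp: Lker_eq)
qed

lemma has_integral_Lker_Kker:
  assumes "0 < \<alpha>" "\<alpha> < 1" "u < t"
  shows "((\<lambda>v. Lker \<alpha> (t - v) * Kker \<alpha> (v - u)) has_integral 1) {u..t}"
proof -
  have G: "Gamma \<alpha> > 0" "Gamma (1 - \<alpha>) > 0" using assms by simp_all
  have "((\<lambda>v. (v - u) powr (\<alpha> - 1) * (t - v) powr (1 - \<alpha> - 1)) has_integral (t - u) powr (\<alpha> + (1 - \<alpha>) - 1) * Beta \<alpha> (1 - \<alpha>)) {u..t}"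
    using assms by (intro has_integral_Beta_shifted) auto
  then have "((\<lambda>v. (v - u) powr (\<alpha> - 1) * (t - v) powr (-\<alpha>)) has_integral Gamma \<alpha> * Gamma (1 - \<alpha>)) {u..t}"
    using assms by (simp add: Beta_def)
  from has_integral_divide[OF this, of "Gamma \<alpha> * Gamma (1 - \<alpha>)"]
  have "((\<lambda>v. (v - u) powr (\<alpha> - 1) * (t - v) powr (-\<alpha>) / (Gamma \<alpha> * Gamma (1 - \<alpha>))) has_integral 1) {u..t}"
    using G by simp
  then show ?thesis
    by (subst has_integral_cong[where g = "\<lambda>v. (v - u) powr (\<alpha> - 1) * (t - v) powr (-\<alpha>) / (Gamma \<alpha> * Gamma (1 - \<alpha>))"])
       (auto simp: Lker_eq Kker_eq mult_ac)
qed

lemma phi_le: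
  assumes "0 < h" shows "phi h v \<le> v"
proof -
  have "h * of_int \<lfloor>v / h\<rfloor> \<le> h * (v / h)"
    using assms by (intro mult_left_mono) linarith+
  then show ?thesis using assms by (simp add: phi_def)
qed

lemma less_phi_add:
  assumes "0 < h" shows "v < phi h v + h"
proof -
  have "h * (v / h) < h * (of_int \<lfloor>v / h\<rfloor> + 1)"
    using assms by (intro mult_strict_left_mono) linarith+
  then show ?thesis using assms by (simp add: phi_def distrib_left)
qed

lemma grid_le_phi:
  assumes "0 < h" "h * of_int k \<le> v"
  shows "h * of_int k \<le> phi h v"
proof -
  have "of_int k \<le> v / h"
    using assms by (simp add: field_simps)
  then have "k \<le> \<lfloor>v / h\<rfloor>"
    by linarith
  then show ?thesis
    unfolding phi_def using assms by simp
qed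

lemma phi_le_phi:
  assumes "0 < h" "v < phi h u + h"
  shows "phi h v \<le> phi h u"
proof -
  have "v / h < of_int \<lfloor>u / h\<rfloor> + 1"
    using assms by (simp add: phi_def field_simps)
  then have "\<lfloor>v / h\<rfloor> \<le> \<lfloor>u / h\<rfloor>"
    by linarith
  then show ?thesis
    unfolding phi_def using assms by simp
qed

section \<open>The discretised resolvent\<close>

definition gh_error_const :: "real \<Rightarrow> real" where
  "gh_error_const \<alpha> = 4 + 4 / ((1 - \<alpha>) * Gamma (1 - \<alpha>))
     + 2 / (\<alpha> * Gamma \<alpha> * Gamma (1 - \<alpha>)) + 24 / ((1 - \<alpha>) * Gamma \<alpha> * Gamma (1 - \<alpha>))"

lemma gh_error_const_ge:
  assumes "0 < \<alpha>" "\<alpha> < 1"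
  shows "4 \<le> gh_error_const \<alpha>" "4 / ((1 - \<alpha>) * Gamma (1 - \<alpha>)) \<le> gh_error_const \<alpha>"
    "2 / (\<alpha> * Gamma \<alpha> * Gamma (1 - \<alpha>)) + 24 / ((1 - \<alpha>) * Gamma \<alpha> * Gamma (1 - \<alpha>)) \<le> gh_error_const \<alpha>"
    "2 / Gamma (1 - \<alpha>) \<le> gh_error_const \<alpha>"
proof -
  have "0 < 4 / ((1 - \<alpha>) * Gamma (1 - \<alpha>))" "0 < 2 / (\<alpha> * Gamma \<alpha> * Gamma (1 - \<alpha>))"
    "0 < 24 / ((1 - \<alpha>) * Gamma \<alpha> * Gamma (1 - \<alpha>))"
    using assms by simp_all
  then show "4 \<le> gh_error_const \<alpha>" "4 / ((1 - \<alpha>) * Gamma (1 - \<alpha>)) \<le> gh_error_const \<alpha>"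
    "2 / (\<alpha> * Gamma \<alpha> * Gamma (1 - \<alpha>)) + 24 / ((1 - \<alpha>) * Gamma \<alpha> * Gamma (1 - \<alpha>)) \<le> gh_error_const \<alpha>"
    by (simp_all add: gh_error_const_def)
  have "2 / Gamma (1 - \<alpha>) \<le> 4 / ((1 - \<alpha>) * Gamma (1 - \<alpha>))"
    using assms by (simp add: field_simps)
  with \<open>4 / ((1 - \<alpha>) * Gamma (1 - \<alpha>)) \<le> gh_error_const \<alpha>\<close>
  show "2 / Gamma (1 - \<alpha>) \<le> gh_error_const \<alpha>"
    by linarith
qed

locale discretised_resolvent =
  fixes \<alpha> h u t :: real
  assumes alpha_pos: "0 < \<alpha>" and alpha_less_one: "\<alpha> < 1"
    and h_pos: "0 < h" and u_nonneg: "0 \<le> u" and u_less_t: "u < t"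
begin

definition next_node :: real where
  "next_node = phi h u + h"

lemma next_node_grid: "next_node = h * of_int (\<lfloor>u / h\<rfloor> + 1)"
  by (simp add: next_node_def phi_def distrib_left)

lemma u_less_next_node: "u < next_node"
  using less_phi_add[OF h_pos] by (simp add: next_node_def)

lemma next_node_le: "next_node \<le> u + h"
  using phi_le[OF h_pos, of u] by (simp add: next_node_def)

lemma h_minus_chi: "h - chi h u = next_node - u"
  by (simp add: chi_def next_node_def)

lemma next_node_le_phi: "next_node \<le> v \<Longrightarrow> next_node \<le> phi h v"
  using grid_le_phi[OF h_pos, of "\<lfloor>u / h\<rfloor> + 1" v] by (simp add: next_node_grid)

lemma next_node_add_le_phi: "next_node + h \<le> v \<Longrightarrow> next_node + h \<le> phi h v"
  using grid_le_phi[OF h_pos, of "\<lfloor>u / h\<rfloor> + 2" v] by (simp add: next_node_grid algebra_simps)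

lemma phi_next_node: "phi h next_node = next_node"
  using next_node_le_phi[of next_node] phi_le[OF h_pos, of next_node] by simp

lemma Kh_before_next_node: "v < next_node \<Longrightarrow> Kh \<alpha> h v u = 0"
  using phi_le_phi[OF h_pos, of v u] phi_le[OF h_pos, of u] by (simp add: Kh_def next_node_def)

lemma Kh_from_next_node: "next_node \<le> v \<Longrightarrow> Kh \<alpha> h v u = Kker \<alpha> (phi h v - u)"
  using next_node_le_phi[of v] u_less_next_node u_nonneg by (simp add: Kh_def)

lemma Kh_nonneg: "0 \<le> Kh \<alpha> h v u"
  using alpha_pos by (simp add: Kh_def Kker_nonneg)

lemma Kh_le: "Kh \<alpha> h v u \<le> Kker \<alpha> (next_node - u)"
proof (cases "v < next_node")
  case True
  then show ?thesis using alpha_pos by (simp add: Kh_before_next_node Kker_nonneg)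
next
  case False
  then have "Kker \<alpha> (phi h v - u) \<le> Kker \<alpha> (next_node - u)"
    using next_node_le_phi[of v] u_less_next_node alpha_pos alpha_less_one by (intro Kker_antimono) auto
  with False show ?thesis by (simp add: Kh_from_next_node)
qed

lemma has_integral_gh_majorant:
  "((\<lambda>v. Lker \<alpha> (t - v) * Kker \<alpha> (next_node - u)) has_integral
      (t - u) powr (1 - \<alpha>) / ((1 - \<alpha>) * Gamma (1 - \<alpha>)) * Kker \<alpha> (next_node - u)) {u..t}"
  using u_less_t alpha_less_one by (intro has_integral_mult_left has_integral_Lker) auto

lemma gh_integrand_le_majorant: "Lker \<alpha> (t - v) * Kh \<alpha> h v u \<le> Lker \<alpha> (t - v) * Kker \<alpha> (next_node - u)"
  using mult_left_mono[OF Kh_le Lker_nonneg[OF alpha_less_one]] .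

lemma set_integrable_gh_integrand: "set_integrable lborel {u..t} (\<lambda>v. Lker \<alpha> (t - v) * Kh \<alpha> h v u)"
proof (rule set_integrable_bound)
  show "set_integrable lborel {u..t} (\<lambda>v. Lker \<alpha> (t - v) * Kker \<alpha> (next_node - u))"
    using has_integral_gh_majorant alpha_pos alpha_less_one
    by (intro set_integrable_lborel_if_nonneg) (auto simp: integrable_on_def Kker_nonneg Lker_nonneg)
  show "set_borel_measurable lborel {u..t} (\<lambda>v. Lker \<alpha> (t - v) * Kh \<alpha> h v u)"
    unfolding set_borel_measurable_def by measurable
  show "AE v in lborel. v \<in> {u..t} \<longrightarrow>
      norm (Lker \<alpha> (t - v) * Kh \<alpha> h v u) \<le> norm (Lker \<alpha> (t - v) * Kker \<alpha> (next_node - u))"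
    using alpha_pos alpha_less_one gh_integrand_le_majorant Kh_nonneg
    by (intro AE_I2) (auto simp: abs_mult Lker_nonneg Kker_nonneg)
qed

lemma gh_integrand_integrable: "(\<lambda>v. Lker \<alpha> (t - v) * Kh \<alpha> h v u) integrable_on {u..t}"
  using set_borel_integral_eq_integral(1)[OF set_integrable_gh_integrand] .

lemma gh_eq_integral: "gh \<alpha> h t u = integral {u..t} (\<lambda>v. Lker \<alpha> (t - v) * Kh \<alpha> h v u)"
  using set_borel_integral_eq_integral(2)[OF set_integrable_gh_integrand] by (simp add: gh_def)

lemma gh_nonneg: "0 \<le> gh \<alpha> h t u"
  unfolding gh_eq_integral using gh_integrand_integrable alpha_less_one
  by (intro integral_nonneg) (auto simp: Kh_nonneg Lker_nonneg)

lemma gh_le: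
  "gh \<alpha> h t u \<le> (t - u) powr (1 - \<alpha>) / ((1 - \<alpha>) * Gamma (1 - \<alpha>)) * Kker \<alpha> (next_node - u)"
  unfolding gh_eq_integral
  using gh_integrand_integrable has_integral_gh_majorant gh_integrand_le_majorant
  by (intro has_integral_le[OF integrable_integral]) auto

lemma gh_error_near_diagonal:
  assumes "t - u \<le> 4 * h"
  shows "\<bar>gh \<alpha> h t u - 1\<bar> \<le> 4 * min ((h / (t - u)) powr \<alpha>) 1
    + 4 / ((1 - \<alpha>) * Gamma (1 - \<alpha>)) * h * Kker \<alpha> (next_node - u) * min ((1 / (t - u)) powr \<alpha>) ((1 / h) powr \<alpha>)"
proof -
  have s: "0 < t - u" using u_less_t by simp
  have "1 / 4 \<le> min (h / (t - u)) 1"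
    using assms s by (simp add: field_simps)
  also have "\<dots> \<le> (h / (t - u)) powr \<alpha>"
    using s h_pos alpha_pos alpha_less_one by (intro min_le_powr) auto
  finally have one_le: "1 \<le> 4 * min ((h / (t - u)) powr \<alpha>) 1"
    by simp
  have "(t - u) powr (1 - \<alpha>) * Kker \<alpha> (next_node - u)
      \<le> (4 * h * min ((1 / (t - u)) powr \<alpha>) ((1 / h) powr \<alpha>)) * Kker \<alpha> (next_node - u)"
    using assms s h_pos alpha_pos alpha_less_one
    by (intro mult_right_mono powr_one_minus_le_min Kker_nonneg) auto
  then have "gh \<alpha> h t u \<le> 4 / ((1 - \<alpha>) * Gamma (1 - \<alpha>)) * h * Kker \<alpha> (next_node - u)
      * min ((1 / (t - u)) powr \<alpha>) ((1 / h) powr \<alpha>)"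
    using gh_le alpha_less_one by (auto simp: field_simps intro: order_trans)
  then show ?thesis
    using one_le gh_nonneg by linarith
qed

definition error_integrand :: "real \<Rightarrow> real" where
  "error_integrand v = Lker \<alpha> (t - v) * (Kh \<alpha> h v u - Kker \<alpha> (v - u))"

lemma error_integrand_integrable: "error_integrand integrable_on {u..t}"
  and gh_minus_one_eq: "gh \<alpha> h t u - 1 = integral {u..t} error_integrand"
proof -
  have exact: "((\<lambda>v. Lker \<alpha> (t - v) * Kker \<alpha> (v - u)) has_integral 1) {u..t}"
    using alpha_pos alpha_less_one u_less_t by (rule has_integral_Lker_Kker)
  have "((\<lambda>v. Lker \<alpha> (t - v) * Kh \<alpha> h v u - Lker \<alpha> (t - v) * Kker \<alpha> (v - u))
      has_integral gh \<alpha> h t u - 1) {u..t}"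
    unfolding gh_eq_integral using gh_integrand_integrable exact
    by (intro has_integral_diff) (auto simp: has_integral_integral)
  moreover have "error_integrand = (\<lambda>v. Lker \<alpha> (t - v) * Kh \<alpha> h v u - Lker \<alpha> (t - v) * Kker \<alpha> (v - u))"
    by (simp add: fun_eq_iff error_integrand_def right_diff_distrib)
  ultimately have "(error_integrand has_integral gh \<alpha> h t u - 1) {u..t}"
    by simp
  then show "error_integrand integrable_on {u..t}" "gh \<alpha> h t u - 1 = integral {u..t} error_integrand"
    by (auto simp: integrable_on_def integral_unique)
qed

lemma error_integrand_integrable_on: "u \<le> c \<Longrightarrow> b \<le> t \<Longrightarrow> error_integrand integrable_on {c..b}"
  using error_integrand_integrable by (rule integrable_on_subinterval) auto

context
  assumes far: "4 * h < t - u"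
begin

lemma next_node_add_less: "next_node + h < t"
  using next_node_le far h_pos by linarith

lemma Lker_le_near_u:
  assumes "v \<le> next_node + h"
  shows "Lker \<alpha> (t - v) \<le> 2 * (t - u) powr (-\<alpha>) / Gamma (1 - \<alpha>)"
  using assms next_node_le far h_pos alpha_pos alpha_less_one
  by (intro Lker_le_of_half_le) auto

lemma abs_error_integrand_le_initial:
  assumes "v \<in> {u..next_node}"
  shows "\<bar>error_integrand v\<bar> \<le> 2 * (t - u) powr (-\<alpha>) / (Gamma \<alpha> * Gamma (1 - \<alpha>)) * (v - u) powr (\<alpha> - 1)"
proof (cases "v = next_node")
  case True
  then have "error_integrand v = 0"
    by (simp add: error_integrand_def Kh_from_next_node phi_next_node)
  then show ?thesis using alpha_pos alpha_less_one by simp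
next
  case False
  with assms have "v < next_node" by simp
  then have "\<bar>error_integrand v\<bar> = Lker \<alpha> (t - v) * Kker \<alpha> (v - u)"
    using alpha_pos alpha_less_one
    by (simp add: error_integrand_def Kh_before_next_node abs_mult Lker_nonneg Kker_nonneg)
  also have "\<dots> \<le> 2 * (t - u) powr (-\<alpha>) / Gamma (1 - \<alpha>) * ((v - u) powr (\<alpha> - 1) / Gamma \<alpha>)"
    using assms \<open>v < next_node\<close> h_pos alpha_pos alpha_less_one
    by (intro mult_mono Lker_le_near_u) (auto simp: Kker_eq)
  finally show ?thesis by (simp add: mult.commute)
qed

lemma abs_integral_error_integrand_initial:
  "\<bar>integral {u..next_node} error_integrand\<bar> \<le> 2 / (\<alpha> * Gamma \<alpha> * Gamma (1 - \<alpha>)) * (h / (t - u)) powr \<alpha>"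
proof -
  define c where "c = 2 * (t - u) powr (-\<alpha>) / (Gamma \<alpha> * Gamma (1 - \<alpha>))"
  have "((\<lambda>v. c * (v - u) powr (\<alpha> - 1)) has_integral c * (((next_node - u) powr \<alpha> - (u - u) powr \<alpha>) / \<alpha>))
      {u..next_node}"
    using alpha_pos u_less_next_node by (intro has_integral_mult_right has_integral_powr_shifted) auto
  then have "\<bar>integral {u..next_node} error_integrand\<bar> \<le> c * ((next_node - u) powr \<alpha> / \<alpha>)"
    using u_less_next_node next_node_add_less h_pos abs_error_integrand_le_initial
    by (intro abs_integral_le_has_integral error_integrand_integrable_on) (auto simp: c_def)
  also have "\<dots> \<le> c * (h powr \<alpha> / \<alpha>)"
    using u_less_next_node next_node_le alpha_pos alpha_less_one
    by (intro mult_left_mono divide_right_mono powr_mono2) (auto simp: c_def)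
  also have "\<dots> = 2 / (\<alpha> * Gamma \<alpha> * Gamma (1 - \<alpha>)) * (h / (t - u)) powr \<alpha>"
    using h_pos u_less_t by (simp add: c_def powr_divide powr_minus_divide)
  finally show ?thesis .
qed

lemma abs_error_integrand_le_first_cell:
  assumes "v \<in> {next_node..next_node + h}"
  shows "\<bar>error_integrand v\<bar> \<le> 2 * (t - u) powr (-\<alpha>) / Gamma (1 - \<alpha>) * Kker \<alpha> (next_node - u)"
proof -
  have "Kker \<alpha> (v - u) \<le> Kker \<alpha> (next_node - u)"
    using assms u_less_next_node alpha_pos alpha_less_one by (intro Kker_antimono) auto
  then have "\<bar>Kh \<alpha> h v u - Kker \<alpha> (v - u)\<bar> \<le> Kker \<alpha> (next_node - u)"
    using Kh_nonneg[of v] Kh_le[of v] Kker_nonneg[OF alpha_pos, of "v - u"] by (simp add: abs_le_iff)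
  then show ?thesis
    unfolding error_integrand_def abs_mult using assms alpha_less_one
    by (intro mult_mono) (auto simp: Lker_nonneg intro!: Lker_le_near_u)
qed

lemma abs_integral_error_integrand_first_cell:
  "\<bar>integral {next_node..next_node + h} error_integrand\<bar>
     \<le> 2 / Gamma (1 - \<alpha>) * h * Kker \<alpha> (next_node - u) * (t - u) powr (-\<alpha>)"
proof -
  have "((\<lambda>v. 2 * (t - u) powr (-\<alpha>) / Gamma (1 - \<alpha>) * Kker \<alpha> (next_node - u)) has_integral
      h * (2 * (t - u) powr (-\<alpha>) / Gamma (1 - \<alpha>) * Kker \<alpha> (next_node - u))) {next_node..next_node + h}"
    using has_integral_const_real[of "2 * (t - u) powr (-\<alpha>) / Gamma (1 - \<alpha>) * Kker \<alpha> (next_node - u)"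
        next_node "next_node + h"] h_pos
    by simp
  then show ?thesis
    using u_less_next_node next_node_add_less abs_error_integrand_le_first_cell
    by (intro order_trans[OF abs_integral_le_has_integral] error_integrand_integrable_on) (auto simp: mult_ac)
qed

lemma Kh_minus_Kker_tail:
  assumes "next_node + h \<le> v"
  shows "0 \<le> Kh \<alpha> h v u - Kker \<alpha> (v - u)"
    and "Kh \<alpha> h v u - Kker \<alpha> (v - u) \<le> 4 * h * (v - u) powr (\<alpha> - 2) / Gamma \<alpha>"
proof -
  define x where "x = phi h v - u"
  have x: "h \<le> x" "x \<le> v - u" "v - u < x + h"
    using next_node_add_le_phi[OF assms] u_less_next_node phi_le[OF h_pos, of v] less_phi_add[OF h_pos, of v]
    by (auto simp: x_def)
  have Kh: "Kh \<alpha> h v u = Kker \<alpha> x"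
    using assms h_pos by (simp add: Kh_from_next_node x_def)
  show "0 \<le> Kh \<alpha> h v u - Kker \<alpha> (v - u)"
    unfolding Kh using x h_pos alpha_pos alpha_less_one Kker_antimono[of \<alpha> x "v - u"] by simp
  have "x powr (-(2 - \<alpha>)) \<le> 2 powr 2 * (v - u) powr (-(2 - \<alpha>))"
    using x h_pos alpha_pos alpha_less_one by (intro powr_neg_le_of_half_le) auto
  then have x_powr: "x powr (\<alpha> - 2) \<le> 4 * (v - u) powr (\<alpha> - 2)"
    by simp
  have "Kker \<alpha> (x + h) \<le> Kker \<alpha> (v - u)"
    using x h_pos alpha_pos alpha_less_one by (intro Kker_antimono) auto
  then have "Kh \<alpha> h v u - Kker \<alpha> (v - u) \<le> Kker \<alpha> x - Kker \<alpha> (x + h)"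
    unfolding Kh by simp
  also have "\<dots> \<le> h * x powr (\<alpha> - 2) / Gamma \<alpha>"
    using x h_pos alpha_pos by (intro Kker_diff_le) auto
  also have "\<dots> \<le> h * (4 * (v - u) powr (\<alpha> - 2)) / Gamma \<alpha>"
    using x_powr h_pos alpha_pos by (intro divide_right_mono mult_left_mono) auto
  finally show "Kh \<alpha> h v u - Kker \<alpha> (v - u) \<le> 4 * h * (v - u) powr (\<alpha> - 2) / Gamma \<alpha>"
    by (simp add: ac_simps)
qed

lemma abs_error_integrand_le_tail:
  assumes "v \<in> {next_node + h..t}"
  shows "\<bar>error_integrand v\<bar> \<le> 4 * h / (Gamma \<alpha> * Gamma (1 - \<alpha>)) *
    (4 * (t - u) powr (\<alpha> - 2) * (t - v) powr (-\<alpha>) + 2 * (t - u) powr (-\<alpha>) * (v - u) powr (\<alpha> - 2))"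
proof -
  have "\<bar>error_integrand v\<bar> = Lker \<alpha> (t - v) * (Kh \<alpha> h v u - Kker \<alpha> (v - u))"
    using assms Kh_minus_Kker_tail(1) alpha_less_one by (simp add: error_integrand_def abs_mult Lker_nonneg)
  also have "\<dots> \<le> Lker \<alpha> (t - v) * (4 * h * (v - u) powr (\<alpha> - 2) / Gamma \<alpha>)"
    using assms alpha_less_one by (intro mult_left_mono Kh_minus_Kker_tail(2)) (auto simp: Lker_nonneg)
  also have "\<dots> = 4 * h / (Gamma \<alpha> * Gamma (1 - \<alpha>)) * ((t - v) powr (-\<alpha>) * (v - u) powr (\<alpha> - 2))"
    using assms by (simp add: Lker_eq ac_simps)
  also have "\<dots> \<le> 4 * h / (Gamma \<alpha> * Gamma (1 - \<alpha>)) *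
      (4 * (t - u) powr (\<alpha> - 2) * (t - v) powr (-\<alpha>) + 2 * (t - u) powr (-\<alpha>) * (v - u) powr (\<alpha> - 2))"
    using assms u_less_next_node h_pos alpha_pos alpha_less_one
    by (intro mult_left_mono powr_product_split) auto
  finally show ?thesis .
qed

lemma has_integral_tail_Lpart:
  "((\<lambda>v. (t - v) powr (-\<alpha>)) has_integral (t - (next_node + h)) powr (1 - \<alpha>) / (1 - \<alpha>))
     {next_node + h..t}"
  using has_integral_powr_reflected[of "1 - \<alpha>" "next_node + h" t t] next_node_add_less alpha_less_one
  by simp

lemma has_integral_tail_Kpart:
  "((\<lambda>v. (v - u) powr (\<alpha> - 2)) has_integral ((next_node + h - u) powr (\<alpha> - 1) - (t - u) powr (\<alpha> - 1)) / (1 - \<alpha>))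
     {next_node + h..t}"
proof -
  have "((\<lambda>v. (v - u) powr (\<alpha> - 1 - 1)) has_integral ((t - u) powr (\<alpha> - 1) - (next_node + h - u) powr (\<alpha> - 1)) / (\<alpha> - 1))
      {next_node + h..t}"
    using next_node_add_less u_less_next_node h_pos alpha_less_one by (intro has_integral_powr_shifted) auto
  moreover have "((t - u) powr (\<alpha> - 1) - (next_node + h - u) powr (\<alpha> - 1)) / (\<alpha> - 1)
      = ((next_node + h - u) powr (\<alpha> - 1) - (t - u) powr (\<alpha> - 1)) / (1 - \<alpha>)"
    by (metis minus_diff_eq minus_divide_divide)
  ultimately show ?thesis
    by simp
qed

lemma abs_integral_error_integrand_tail:
  "\<bar>integral {next_node + h..t} error_integrand\<bar> \<le> 24 / ((1 - \<alpha>) * Gamma \<alpha> * Gamma (1 - \<alpha>)) * (h / (t - u)) powr \<alpha>"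
proof -
  define s where "s = t - u"
  define c where "c = 4 * h / (Gamma \<alpha> * Gamma (1 - \<alpha>))"
  define I1 where "I1 = (t - (next_node + h)) powr (1 - \<alpha>) / (1 - \<alpha>)"
  define I2 where "I2 = ((next_node + h - u) powr (\<alpha> - 1) - s powr (\<alpha> - 1)) / (1 - \<alpha>)"
  have s: "0 < s" "h < s" using far h_pos by (auto simp: s_def)
  have I1: "I1 \<le> s powr (1 - \<alpha>) / (1 - \<alpha>)"
    using next_node_add_less u_less_next_node h_pos alpha_less_one
    by (auto simp: I1_def s_def intro!: divide_right_mono powr_mono2)
  have "(next_node + h - u) powr (\<alpha> - 1) \<le> h powr (\<alpha> - 1)"
    using u_less_next_node h_pos alpha_less_one by (intro powr_mono2') auto
  then have "(next_node + h - u) powr (\<alpha> - 1) - s powr (\<alpha> - 1) \<le> h powr (\<alpha> - 1)"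
    using powr_ge_zero[of s "\<alpha> - 1"] by linarith
  then have I2: "I2 \<le> h powr (\<alpha> - 1) / (1 - \<alpha>)"
    using alpha_less_one by (simp add: I2_def divide_right_mono)
  have "((\<lambda>v. c * (4 * s powr (\<alpha> - 2) * (t - v) powr (-\<alpha>) + 2 * s powr (-\<alpha>) * (v - u) powr (\<alpha> - 2)))
      has_integral c * (4 * s powr (\<alpha> - 2) * I1 + 2 * s powr (-\<alpha>) * I2)) {next_node + h..t}"
    unfolding I1_def I2_def s_def
    by (intro has_integral_mult_right has_integral_add has_integral_tail_Lpart has_integral_tail_Kpart)
  then have "\<bar>integral {next_node + h..t} error_integrand\<bar> \<le> c * (4 * s powr (\<alpha> - 2) * I1 + 2 * s powr (-\<alpha>) * I2)"
    using next_node_add_less u_less_next_node h_pos abs_error_integrand_le_tail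
    by (intro abs_integral_le_has_integral error_integrand_integrable_on) (auto simp: c_def s_def)
  also have "\<dots> \<le> c * (4 * s powr (\<alpha> - 2) * (s powr (1 - \<alpha>) / (1 - \<alpha>)) + 2 * s powr (-\<alpha>) * (h powr (\<alpha> - 1) / (1 - \<alpha>)))"
    using I1 I2 h_pos alpha_pos alpha_less_one by (intro mult_left_mono add_mono) (auto simp: c_def)
  also have "\<dots> = 4 / ((1 - \<alpha>) * Gamma \<alpha> * Gamma (1 - \<alpha>))
      * (h * (4 * s powr (\<alpha> - 2) * s powr (1 - \<alpha>) + 2 * s powr (-\<alpha>) * h powr (\<alpha> - 1)))"
    using alpha_pos alpha_less_one by (simp add: c_def divide_simps)
  also have "\<dots> \<le> 4 / ((1 - \<alpha>) * Gamma \<alpha> * Gamma (1 - \<alpha>)) * (6 * (h / s) powr \<alpha>)"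
    using s h_pos alpha_pos alpha_less_one by (intro mult_left_mono tail_powr_sum_le) auto
  finally show ?thesis
    by (simp add: s_def)
qed

lemma gh_error_far_from_diagonal:
  "\<bar>gh \<alpha> h t u - 1\<bar> \<le> (2 / (\<alpha> * Gamma \<alpha> * Gamma (1 - \<alpha>)) + 24 / ((1 - \<alpha>) * Gamma \<alpha> * Gamma (1 - \<alpha>)))
      * (h / (t - u)) powr \<alpha> + 2 / Gamma (1 - \<alpha>) * h * Kker \<alpha> (next_node - u) * (t - u) powr (-\<alpha>)"
proof -
  have "integral {u..next_node} error_integrand + integral {next_node..t} error_integrand = integral {u..t} error_integrand"
    using u_less_next_node next_node_add_less h_pos
    by (intro Henstock_Kurzweil_Integration.integral_combine error_integrand_integrable_on) auto
  moreover have "integral {next_node..next_node + h} error_integrand + integral {next_node + h..t} error_integrand = integral {next_node..t} error_integrand"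
    using u_less_next_node next_node_add_less h_pos
    by (intro Henstock_Kurzweil_Integration.integral_combine error_integrand_integrable_on) auto
  ultimately show ?thesis
    using gh_minus_one_eq abs_integral_error_integrand_initial abs_integral_error_integrand_first_cell abs_integral_error_integrand_tail
    by (simp add: distrib_right)
qed

end

lemma gh_error_bound:
  "\<bar>gh \<alpha> h t u - 1\<bar> \<le> gh_error_const \<alpha> * min ((h / (t - u)) powr \<alpha>) 1
     + gh_error_const \<alpha> * h * Kker \<alpha> (h - chi h u) * min ((1 / (t - u)) powr \<alpha>) ((1 / h) powr \<alpha>)"
proof -
  define C where "C = gh_error_const \<alpha>"
  define m1 where "m1 = min ((h / (t - u)) powr \<alpha>) 1"
  define m2 where "m2 = min ((1 / (t - u)) powr \<alpha>) ((1 / h) powr \<alpha>)"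
  define K where "K = Kker \<alpha> (next_node - u)"
  have nonneg: "0 \<le> m1" "0 \<le> h * K * m2"
    using h_pos alpha_pos by (simp_all add: m1_def m2_def K_def Kker_nonneg)
  note C_ge = gh_error_const_ge[OF alpha_pos alpha_less_one, folded C_def]
  have "\<bar>gh \<alpha> h t u - 1\<bar> \<le> C * m1 + C * (h * K * m2)"
  proof (cases "t - u \<le> 4 * h")
    case True
    then have "\<bar>gh \<alpha> h t u - 1\<bar> \<le> 4 * m1 + 4 / ((1 - \<alpha>) * Gamma (1 - \<alpha>)) * (h * K * m2)"
      using gh_error_near_diagonal by (simp add: m1_def m2_def K_def mult.assoc)
    also have "\<dots> \<le> C * m1 + C * (h * K * m2)"
      using C_ge nonneg by (intro add_mono mult_right_mono) auto
    finally show ?thesis .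
  next
    case False
    then have "h / (t - u) \<le> 1" "1 / (t - u) \<le> 1 / h"
      using h_pos by (simp_all add: field_simps)
    then have "(h / (t - u)) powr \<alpha> \<le> 1" "(1 / (t - u)) powr \<alpha> \<le> (1 / h) powr \<alpha>"
      using h_pos u_less_t alpha_pos by (auto intro: powr_le1 powr_mono2)
    then have "m1 = (h / (t - u)) powr \<alpha>" "m2 = (t - u) powr (-\<alpha>)"
      using u_less_t by (simp_all add: m1_def m2_def powr_minus_divide powr_divide)
    then have "\<bar>gh \<alpha> h t u - 1\<bar> \<le> (2 / (\<alpha> * Gamma \<alpha> * Gamma (1 - \<alpha>)) + 24 / ((1 - \<alpha>) * Gamma \<alpha> * Gamma (1 - \<alpha>))) * m1
        + 2 / Gamma (1 - \<alpha>) * (h * K * m2)"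
      using gh_error_far_from_diagonal False by (simp add: K_def mult.assoc)
    also have "\<dots> \<le> C * m1 + C * (h * K * m2)"
      using C_ge nonneg by (intro add_mono mult_right_mono) auto
    finally show ?thesis .
  qed
  then show ?thesis
    by (simp add: C_def m1_def m2_def K_def h_minus_chi mult.assoc)
qed

end

theorem mainTheorem3:
  fixes T \<alpha> :: real
  assumes "T > 0" and "1/2 < \<alpha>" and "\<alpha> < 1"
  shows "\<exists>C>0. \<forall>h u t. 0 < h \<and> h \<le> 1 \<and> 0 \<le> u \<and> u < t \<and> t \<le> T \<longrightarrow>
           \<bar>gh \<alpha> h t u - 1\<bar> \<le>
             C * min ((h / (t - u)) powr \<alpha>) 1
             + C * h * Kker \<alpha> (h - chi h u) * min ((1 / (t - u)) powr \<alpha>) ((1 / h) powr \<alpha>)"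
proof (intro exI[of _ "gh_error_const \<alpha>"] conjI allI impI)
  have \<alpha>: "0 < \<alpha>" "\<alpha> < 1"
    using assms by simp_all
  show "0 < gh_error_const \<alpha>"
    using gh_error_const_ge(1)[OF \<alpha>] by simp
  fix h u t :: real
  assume "0 < h \<and> h \<le> 1 \<and> 0 \<le> u \<and> u < t \<and> t \<le> T"
  then interpret discretised_resolvent \<alpha> h u t
    using \<alpha> by unfold_locales auto
  show "\<bar>gh \<alpha> h t u - 1\<bar> \<le> gh_error_const \<alpha> * min ((h / (t - u)) powr \<alpha>) 1
      + gh_error_const \<alpha> * h * Kker \<alpha> (h - chi h u) * min ((1 / (t - u)) powr \<alpha>) ((1 / h) powr \<alpha>)"
    by (rule gh_error_bound)
qed

end
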